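(* Every mean-variance team stochastic game as described in the context has a deterministic joint policy $\boldsymbol{\mu}^*\in\mathcal{D}$ (i.e. each $\mu_i^*$ maps $\mathcal{S}$ to $\mathcal{A}_i$) such that $J(\boldsymbol{\mu}^* )=\max_{\boldsymbol{\mu}\in\mathcal{U}}J(\boldsymbol{\mu})$; in particular $\boldsymbol{\mu}^*$ is a Nash equilibrium, i.e. $J(\mu_i^*,\boldsymbol{\mu}_{-i}^* )\ge J(\mu_i,\boldsymbol{\mu}^*_{-i})$ for all $i\in\mathcal{N}$ and all $\mu_i\in\mathcal{U}_i$.
   Context: A team stochastic game consists of a finite set of agents $\mathcal{N}=\{1,\dots,N\}$, a finite state space $\mathcal{S}$, finite action sets $\mathcal{A}_i$ with joint action set $\mathcal{A}=\prod_i\mathcal{A}_i$, a transition kernel $P(s'|s,\boldsymbol{a})$ and a common reward $r:\mathcal{S}\times\mathcal{A}\to\mathbb{R}$. A policy of agent $i$ is $\mu_i:\mathcal{S}\to\Delta(\mathcal{A}_i)$ (set $\mathcal{U}_i$); a joint policy $\boldsymbol{\mu}=(\mu_1,\dots,\mu_N)\in\mathcal{U}=\prod_i\mathcal{U}_i$ selects $\boldsymbol{a}$ in state $s$ with probability $\prod_i\mu_i(a_i|s)$; $\mathcal{D}\subset\mathcal{U}$ is the set of deterministic joint policies. $(\mu_i,\boldsymbol{\mu}_{-i})$ denotes the joint policy in which agent $i$ uses $\mu_i$ and the others use $\boldsymbol{\mu}_{-i}$. Standing assumption: the Markov chain $P^{\boldsymbol{\mu}}(s'|s)=\sum_{\boldsymbol{a}}\boldsymbol{\mu}(\boldsymbol{a}|s)P(s'|s,\boldsymbol{a})$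 is ergodic for every $\boldsymbol{\mu}\in\mathcal{U}$, with stationary distribution $\pi^{\boldsymbol{\mu}}$. Define $\eta^{\boldsymbol{\mu}}=\sum_s\pi^{\boldsymbol{\mu}}(s)\sum_{\boldsymbol{a}}\boldsymbol{\mu}(\boldsymbol{a}|s)r(s,\boldsymbol{a})$ (long-run average reward), $\zeta^{\boldsymbol{\mu}}=\sum_s\pi^{\boldsymbol{\mu}}(s)\sum_{\boldsymbol{a}}\boldsymbol{\mu}(\boldsymbol{a}|s)(r(s,\boldsymbol{a})-\eta^{\boldsymbol{\mu}})^2$ (long-run variance), and for a fixed $\beta\ge0$, $J(\boldsymbol{\mu})=\eta^{\boldsymbol{\mu}}-\beta\zeta^{\boldsymbol{\mu}}$. *)

theory Defs
  imports Main "HOL-Library.Function_Algebras" Complex_Main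
begin

definition joint_actions :: "('i \<Rightarrow> 'a set) \<Rightarrow> ('i \<Rightarrow> 'a) set" where
  "joint_actions A = {a. \<forall>i. a i \<in> A i}"

definition is_policy :: "'a set \<Rightarrow> ('s \<Rightarrow> 'a \<Rightarrow> real) \<Rightarrow> bool" where
  "is_policy Ai m \<longleftrightarrow>
     (\<forall>s. (\<forall>a. 0 \<le> m s a) \<and> (\<forall>a. a \<notin> Ai \<longrightarrow> m s a = 0) \<and> (\<Sum>a\<in>Ai. m s a) = 1)"

definition joint_policies :: "('i \<Rightarrow> 'a set) \<Rightarrow> ('i \<Rightarrow> 's \<Rightarrow> 'a \<Rightarrow> real) set" where
  "joint_policies A = {mu. \<forall>i. is_policy (A i) (mu i)}"

definition deterministic_policies :: "('i \<Rightarrow> 'a set) \<Rightarrow> ('i \<Rightarrow> 's \<Rightarrow> 'a \<Rightarrow> real) set" where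
  "deterministic_policies A = {mu. \<exists>d :: 'i \<Rightarrow> 's \<Rightarrow> 'a. (\<forall>i s. d i s \<in> A i) \<and>
       (\<forall>i s a. mu i s a = (if a = d i s then 1 else 0))}"

definition joint_prob :: "('i::finite \<Rightarrow> 's \<Rightarrow> 'a \<Rightarrow> real) \<Rightarrow> 's \<Rightarrow> ('i \<Rightarrow> 'a) \<Rightarrow> real" where
  "joint_prob mu s a = (\<Prod>i\<in>UNIV. mu i s (a i))"

definition chain :: "('i \<Rightarrow> 'a set) \<Rightarrow> ('s \<Rightarrow> ('i \<Rightarrow> 'a) \<Rightarrow> 's \<Rightarrow> real)
     \<Rightarrow> ('i::finite \<Rightarrow> 's \<Rightarrow> 'a \<Rightarrow> real) \<Rightarrow> 's \<Rightarrow> 's \<Rightarrow> real" where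
  "chain A P mu s s' = (\<Sum>a\<in>joint_actions A. joint_prob mu s a * P s a s')"

fun mpow :: "('s::finite \<Rightarrow> 's \<Rightarrow> real) \<Rightarrow> nat \<Rightarrow> 's \<Rightarrow> 's \<Rightarrow> real" where
  "mpow Q 0 s s' = (if s = s' then 1 else 0)"
| "mpow Q (Suc k) s s' = (\<Sum>t\<in>UNIV. mpow Q k s t * Q t s')"

definition irreducible_chain :: "('s::finite \<Rightarrow> 's \<Rightarrow> real) \<Rightarrow> bool" where
  "irreducible_chain Q \<longleftrightarrow> (\<forall>s s'. \<exists>k>0. mpow Q k s s' > 0)"

definition aperiodic_chain :: "('s::finite \<Rightarrow> 's \<Rightarrow> real) \<Rightarrow> bool" where
  "aperiodic_chain Q \<longleftrightarrow> (\<forall>s. Gcd {k. k > 0 \<and> mpow Q k s s > 0} = 1)"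

definition ergodic_chain :: "('s::finite \<Rightarrow> 's \<Rightarrow> real) \<Rightarrow> bool" where
  "ergodic_chain Q \<longleftrightarrow> irreducible_chain Q \<and> aperiodic_chain Q"

definition is_stationary :: "('s::finite \<Rightarrow> 's \<Rightarrow> real) \<Rightarrow> ('s \<Rightarrow> real) \<Rightarrow> bool" where
  "is_stationary Q p \<longleftrightarrow> (\<forall>s. 0 \<le> p s) \<and> (\<Sum>s\<in>UNIV. p s) = 1 \<and>
      (\<forall>s'. p s' = (\<Sum>s\<in>UNIV. p s * Q s s'))"

text \<open>The (unique, under ergodicity) stationary distribution.\<close>
definition stat_dist :: "('s::finite \<Rightarrow> 's \<Rightarrow> real) \<Rightarrow> 's \<Rightarrow> real" where
  "stat_dist Q = (THE p. is_stationary Q p)"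

definition avg_reward :: "('i \<Rightarrow> 'a set) \<Rightarrow> ('s::finite \<Rightarrow> ('i \<Rightarrow> 'a) \<Rightarrow> 's \<Rightarrow> real)
    \<Rightarrow> ('s \<Rightarrow> ('i \<Rightarrow> 'a) \<Rightarrow> real) \<Rightarrow> ('i::finite \<Rightarrow> 's \<Rightarrow> 'a \<Rightarrow> real) \<Rightarrow> real" where
  "avg_reward A P r mu = (\<Sum>s\<in>UNIV. stat_dist (chain A P mu) s *
      (\<Sum>a\<in>joint_actions A. joint_prob mu s a * r s a))"

definition avg_variance :: "('i \<Rightarrow> 'a set) \<Rightarrow> ('s::finite \<Rightarrow> ('i \<Rightarrow> 'a) \<Rightarrow> 's \<Rightarrow> real)
    \<Rightarrow> ('s \<Rightarrow> ('i \<Rightarrow> 'a) \<Rightarrow> real) \<Rightarrow> ('i::finite \<Rightarrow> 's \<Rightarrow> 'a \<Rightarrow> real) \<Rightarrow> real" where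
  "avg_variance A P r mu = (\<Sum>s\<in>UNIV. stat_dist (chain A P mu) s *
      (\<Sum>a\<in>joint_actions A. joint_prob mu s a * (r s a - avg_reward A P r mu)\<^sup>2))"

definition mv_objective :: "real \<Rightarrow> ('i \<Rightarrow> 'a set) \<Rightarrow> ('s::finite \<Rightarrow> ('i \<Rightarrow> 'a) \<Rightarrow> 's \<Rightarrow> real)
    \<Rightarrow> ('s \<Rightarrow> ('i \<Rightarrow> 'a) \<Rightarrow> real) \<Rightarrow> ('i::finite \<Rightarrow> 's \<Rightarrow> 'a \<Rightarrow> real) \<Rightarrow> real" where
  "mv_objective beta A P r mu = avg_reward A P r mu - beta * avg_variance A P r mu"

end

(*
  Fix a reward g. Let d0 be a deterministic decision rule of maximal long-run average
  reward c, and solve the Poisson equation h = g_d0 - c + P_d0 h of its chain. If some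
  action a had positive Bellman residual g(s,a) + (P h)(s,a) - h(s) - c, switching d0 to a
  in the single state s would raise the gain by pi'(s) times that residual, where pi' > 0
  is the stationary distribution of the modified rule; so all residuals are nonpositive.
  Since the stationary average of the residual under any policy mu is the gain of mu
  minus c, no randomized policy beats d0.

  The mean-variance objective reduces to this: for every lam, the average of
  r - beta (r - lam)^2 under mu equals J(mu) - beta (eta(mu) - lam)^2. Taking lam = eta(mu)
  and the deterministic optimum d for that reward gives J(mu) <= J(d). Hence a deterministic
  rule maximizing J over the finitely many rules maximizes J over all joint policies, and
  in particular no agent gains by a unilateral deviation.
*)
theory Submission
  imports Defs "HOL-Analysis.Analysis"
begin

section \<open>Finite Markov chains\<close>

definition stochastic_matrix :: "('s::finite \<Rightarrow> 's \<Rightarrow> real) \<Rightarrow> bool" where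
  "stochastic_matrix Q \<longleftrightarrow> (\<forall>s s'. 0 \<le> Q s s') \<and> (\<forall>s. (\<Sum>s'\<in>UNIV. Q s s') = 1)"

lemma sum_left_mult_stochastic_matrix:
  assumes "stochastic_matrix Q"
  shows "(\<Sum>s'\<in>UNIV. \<Sum>s\<in>UNIV. v s * Q s s') = (\<Sum>s\<in>UNIV. v s)"
proof -
  have "(\<Sum>s'\<in>UNIV. \<Sum>s\<in>UNIV. v s * Q s s') = (\<Sum>s\<in>UNIV. v s * (\<Sum>s'\<in>UNIV. Q s s'))"
    by (subst sum.swap) (simp add: sum_distrib_left)
  then show ?thesis
    using assms by (simp add: stochastic_matrix_def)
qed

lemma mpow_nonneg: "stochastic_matrix Q \<Longrightarrow> 0 \<le> mpow Q k s s'"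
  by (induction k arbitrary: s') (auto simp: stochastic_matrix_def intro!: sum_nonneg)

lemma is_stationaryD:
  assumes "is_stationary Q p"
  shows "0 \<le> p s" and "(\<Sum>s\<in>UNIV. p s) = 1" and "p s' = (\<Sum>s\<in>UNIV. p s * Q s s')"
  using assms unfolding is_stationary_def by blast+

lemma stationary_expectation_step:
  assumes "is_stationary Q p"
  shows "(\<Sum>s\<in>UNIV. p s * (\<Sum>s'\<in>UNIV. Q s s' * h s')) = (\<Sum>s'\<in>UNIV. p s' * h s')"
proof -
  have "(\<Sum>s\<in>UNIV. p s * (\<Sum>s'\<in>UNIV. Q s s' * h s'))
      = (\<Sum>s\<in>UNIV. \<Sum>s'\<in>UNIV. p s * Q s s' * h s')"
    by (simp add: sum_distrib_left mult.assoc)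
  also have "\<dots> = (\<Sum>s'\<in>UNIV. (\<Sum>s\<in>UNIV. p s * Q s s') * h s')"
    by (subst sum.swap) (simp add: sum_distrib_right)
  finally show ?thesis
    by (simp flip: is_stationaryD(3)[OF assms])
qed

lemma invariant_mpow:
  assumes "\<And>s'. p s' = (\<Sum>s\<in>UNIV. p s * Q s s')"
  shows "p s' = (\<Sum>s\<in>UNIV. p s * mpow Q k s s')"
proof (induction k arbitrary: s')
  case 0
  show ?case by (simp add: if_distrib[of "\<lambda>x. p _ * x"] cong: if_cong)
next
  case (Suc k)
  have "(\<Sum>s\<in>UNIV. p s * mpow Q (Suc k) s s')
      = (\<Sum>s\<in>UNIV. \<Sum>t\<in>UNIV. p s * mpow Q k s t * Q t s')"
    by (simp add: sum_distrib_left mult.assoc)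
  also have "\<dots> = (\<Sum>t\<in>UNIV. (\<Sum>s\<in>UNIV. p s * mpow Q k s t) * Q t s')"
    by (subst sum.swap) (simp add: sum_distrib_right)
  also have "\<dots> = p s'"
    by (simp flip: Suc assms)
  finally show ?case ..
qed

lemma harmonic_mpow:
  assumes "\<And>s. h s = (\<Sum>s'\<in>UNIV. Q s s' * h s')"
  shows "h s = (\<Sum>s'\<in>UNIV. mpow Q k s s' * h s')"
proof (induction k arbitrary: s)
  case 0
  show ?case by (simp add: if_distrib[of "\<lambda>x. x * h _"] cong: if_cong)
next
  case (Suc k)
  have "(\<Sum>s'\<in>UNIV. mpow Q (Suc k) s s' * h s')
      = (\<Sum>s'\<in>UNIV. \<Sum>t\<in>UNIV. mpow Q k s t * (Q t s' * h s'))"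
    by (simp add: sum_distrib_right mult.assoc)
  also have "\<dots> = (\<Sum>t\<in>UNIV. mpow Q k s t * (\<Sum>s'\<in>UNIV. Q t s' * h s'))"
    by (subst sum.swap) (simp add: sum_distrib_left)
  also have "\<dots> = h s"
    by (simp flip: Suc assms)
  finally show ?case ..
qed

lemma invariant_nonneg_vanishing:
  assumes Q: "stochastic_matrix Q" and irr: "irreducible_chain Q"
    and inv: "\<And>s'. w s' = (\<Sum>s\<in>UNIV. w s * Q s s')"
    and nonneg: "\<And>s. 0 \<le> w s" and zero: "w s0 = 0"
  shows "w s = 0"
proof -
  obtain k where pos: "mpow Q k s s0 > 0"
    using irr unfolding irreducible_chain_def by blast
  have "w s * mpow Q k s s0 \<le> (\<Sum>t\<in>UNIV. w t * mpow Q k t s0)"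
    by (rule member_le_sum) (simp_all add: nonneg mpow_nonneg[OF Q])
  also have "\<dots> = 0"
    by (simp flip: invariant_mpow[OF inv] add: zero)
  finally show ?thesis
    using pos nonneg[of s] by (simp add: mult_le_0_iff)
qed

lemma harmonic_nonneg_vanishing:
  assumes Q: "stochastic_matrix Q" and irr: "irreducible_chain Q"
    and harm: "\<And>s. g s = (\<Sum>s'\<in>UNIV. Q s s' * g s')"
    and nonneg: "\<And>s. 0 \<le> g s" and zero: "g s0 = 0"
  shows "g s = 0"
proof -
  obtain k where pos: "mpow Q k s0 s > 0"
    using irr unfolding irreducible_chain_def by blast
  have "mpow Q k s0 s * g s \<le> (\<Sum>t\<in>UNIV. mpow Q k s0 t * g t)"
    by (rule member_le_sum) (simp_all add: nonneg mpow_nonneg[OF Q])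
  also have "\<dots> = 0"
    by (simp flip: harmonic_mpow[OF harm] add: zero)
  finally show ?thesis
    using pos nonneg[of s] by (simp add: mult_le_0_iff)
qed

lemma harmonic_function_const:
  assumes Q: "stochastic_matrix Q" and irr: "irreducible_chain Q"
    and harm: "\<And>s. h s = (\<Sum>s'\<in>UNIV. Q s s' * h s')"
  shows "h s = h s'"
proof -
  have "Max (range h) \<in> range h"
    by (simp add: Max_in)
  then obtain s0 where s0: "h s0 = Max (range h)"
    by (metis rangeE)
  have harm_gap: "h s0 - h t = (\<Sum>t'\<in>UNIV. Q t t' * (h s0 - h t'))" for t
    using Q by (simp add: stochastic_matrix_def right_diff_distrib sum_subtractf
        flip: harm sum_distrib_right)
  have gap_nonneg: "0 \<le> h s0 - h t" for t
    unfolding s0 by (simp add: Max_ge)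
  have "h s0 - h t = 0" for t
    using harmonic_nonneg_vanishing[OF Q irr harm_gap gap_nonneg, of s0] by simp
  then show ?thesis
    by (metis eq_iff_diff_eq_0)
qed

lemma stationary_pos:
  assumes Q: "stochastic_matrix Q" and irr: "irreducible_chain Q" and p: "is_stationary Q p"
  shows "p s > 0"
proof (rule ccontr)
  assume "\<not> p s > 0"
  then have "p s = 0"
    using is_stationaryD(1)[OF p, of s] by simp
  then have "p t = 0" for t
    by (rule invariant_nonneg_vanishing[OF Q irr is_stationaryD(3)[OF p] is_stationaryD(1)[OF p]])
  then show False
    using is_stationaryD(2)[OF p] by simp
qed

lemma stationary_unique:
  assumes Q: "stochastic_matrix Q" and irr: "irreducible_chain Q"
    and p: "is_stationary Q p" and q: "is_stationary Q q"
  shows "p = q"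
proof -
  have q_pos: "q s > 0" for s
    by (rule stationary_pos[OF Q irr q])
  have "Min (range (\<lambda>s. p s / q s)) \<in> range (\<lambda>s. p s / q s)"
    by (simp add: Min_in)
  then obtain s0 where s0: "p s0 / q s0 = Min (range (\<lambda>s. p s / q s))"
    by (metis (no_types, lifting) rangeE)
  define c where "c = p s0 / q s0"
  define w where "w s = p s - c * q s" for s
  have "w s' = (\<Sum>s\<in>UNIV. w s * Q s s')" for s'
    by (simp add: w_def left_diff_distrib sum_subtractf mult.assoc
        flip: sum_distrib_left is_stationaryD(3)[OF p] is_stationaryD(3)[OF q])
  moreover have "0 \<le> w s" for s
  proof -
    have "c \<le> p s / q s"
      unfolding c_def s0 by (rule Min_le) auto
    then show ?thesis
      using q_pos[of s] by (simp add: w_def field_simps)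
  qed
  moreover have "w s0 = 0"
    using q_pos[of s0] by (simp add: w_def c_def)
  ultimately have "w s = 0" for s
    by (rule invariant_nonneg_vanishing[OF Q irr])
  then have p_eq: "p s = c * q s" for s
    by (simp add: w_def)
  then have "c = 1"
    using is_stationaryD(2)[OF p] is_stationaryD(2)[OF q] by (simp flip: sum_distrib_left)
  then show ?thesis
    using p_eq by auto
qed

lemma exists_invariant_vector:
  fixes Q :: "'s::finite \<Rightarrow> 's \<Rightarrow> real"
  assumes Q: "stochastic_matrix Q"
  obtains v where "v \<noteq> 0" and "\<And>s'. v s' = (\<Sum>s\<in>UNIV. v s * Q s s')"
proof -
  define T :: "real^'s \<Rightarrow> real^'s" where "T v = (\<chi> s'. v$s' - (\<Sum>s\<in>UNIV. v$s * Q s s'))" for v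
  have lin: "linear T"
    by (rule linearI) (auto simp: T_def vec_eq_iff sum.distrib algebra_simps sum_distrib_left)
  have mass_zero: "(\<Sum>s'\<in>UNIV. T v $ s') = 0" for v
    using sum_left_mult_stochastic_matrix[OF Q] by (simp add: T_def sum_subtractf)
  have "(\<chi> s. 1) \<notin> range T"
  proof
    assume "(\<chi> s. 1) \<in> range T"
    then obtain v where "T v = (\<chi> s. 1)"
      by auto
    then show False
      using mass_zero[of v] by simp
  qed
  then have "\<not> inj T"
    using linear_injective_imp_surjective[OF lin] by auto
  then obtain v where Tv: "T v = 0" and "v \<noteq> 0"
    using linear_injective_0[OF lin] by blast
  have "v$s' = (\<Sum>s\<in>UNIV. v$s * Q s s')" for s'
    using arg_cong[OF Tv, of "\<lambda>x. x$s'"] by (simp add: T_def)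
  moreover have "(\<lambda>s. v$s) \<noteq> 0"
    using \<open>v \<noteq> 0\<close> by (simp add: vec_eq_iff fun_eq_iff)
  ultimately show ?thesis
    using that by blast
qed

lemma exists_stationary:
  fixes Q :: "'s::finite \<Rightarrow> 's \<Rightarrow> real"
  assumes Q: "stochastic_matrix Q"
  obtains p where "is_stationary Q p"
proof -
  obtain v where "v \<noteq> 0" and v: "\<And>s'. v s' = (\<Sum>s\<in>UNIV. v s * Q s s')"
    using exists_invariant_vector[OF Q] by blast
  define w where "w s = \<bar>v s\<bar>" for s
  have w_sub: "w s' \<le> (\<Sum>s\<in>UNIV. w s * Q s s')" for s'
  proof -
    have "w s' \<le> (\<Sum>s\<in>UNIV. \<bar>v s * Q s s'\<bar>)"
      unfolding w_def by (subst v) (rule sum_abs)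
    then show ?thesis
      using Q by (simp add: w_def abs_mult stochastic_matrix_def)
  qed
  have "(\<Sum>s'\<in>UNIV. (\<Sum>s\<in>UNIV. w s * Q s s') - w s') = 0"
    using sum_left_mult_stochastic_matrix[OF Q] by (simp add: sum_subtractf)
  then have w_inv: "w s' = (\<Sum>s\<in>UNIV. w s * Q s s')" for s'
    using w_sub by (simp add: sum_nonneg_eq_0_iff)
  obtain s1 where "v s1 \<noteq> 0"
    using \<open>v \<noteq> 0\<close> by (auto simp: fun_eq_iff)
  then have "0 < (\<Sum>s\<in>UNIV. w s)"
    by (intro sum_pos2[of _ s1]) (auto simp: w_def)
  then have "is_stationary Q (\<lambda>s. w s / (\<Sum>t\<in>UNIV. w t))"
    unfolding is_stationary_def
    by (auto simp: w_def sum_divide_distrib[symmetric] intro: w_inv[unfolded w_def])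
  then show ?thesis ..
qed

lemma is_stationary_stat_dist:
  assumes Q: "stochastic_matrix Q" and irr: "irreducible_chain Q"
  shows "is_stationary Q (stat_dist Q)"
proof -
  obtain p where p: "is_stationary Q p"
    by (rule exists_stationary[OF Q])
  then have "stat_dist Q = p"
    unfolding stat_dist_def by (blast intro: the_equality stationary_unique[OF Q irr])
  then show ?thesis
    using p by simp
qed

lemma poisson_equation_solvable:
  fixes Q :: "'s::finite \<Rightarrow> 's \<Rightarrow> real"
  assumes Q: "stochastic_matrix Q" and irr: "irreducible_chain Q" and p: "is_stationary Q p"
    and centered: "(\<Sum>s\<in>UNIV. p s * y s) = 0"
  obtains h where "\<And>s. h s = y s + (\<Sum>s'\<in>UNIV. Q s s' * h s')"
proof -
  \<comment> \<open>The rank-one term makes I - Q invertible without changing p-centered equations.\<close>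
  define M :: "real^'s \<Rightarrow> real^'s" where
    "M v = (\<chi> s. v$s - (\<Sum>s'\<in>UNIV. Q s s' * v$s') + (\<Sum>t\<in>UNIV. p t * v$t))" for v
  have lin: "linear M"
    by (rule linearI) (auto simp: M_def vec_eq_iff sum.distrib algebra_simps sum_distrib_left)
  have mean_M: "(\<Sum>s\<in>UNIV. p s * M v $ s) = (\<Sum>s\<in>UNIV. p s * v$s)" for v
    using stationary_expectation_step[OF p] is_stationaryD(2)[OF p]
    by (simp add: M_def algebra_simps sum.distrib sum_subtractf flip: sum_distrib_right)
  have M_eq: "v$s = z s + (\<Sum>s'\<in>UNIV. Q s s' * v$s')"
    if Mv: "M v = (\<chi> s. z s)" and z: "(\<Sum>s\<in>UNIV. p s * z s) = 0" for v z s
  proof -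
    have "v$s - (\<Sum>s'\<in>UNIV. Q s s' * v$s') + (\<Sum>t\<in>UNIV. p t * v$t) = z s"
      using Mv by (simp add: M_def vec_eq_iff)
    moreover have "(\<Sum>t\<in>UNIV. p t * v$t) = 0"
      using mean_M[of v] z Mv by simp
    ultimately show ?thesis
      by simp
  qed
  have "inj M"
    unfolding linear_injective_0[OF lin]
  proof (intro allI impI)
    fix v assume "M v = 0"
    then have harm: "v$s = (\<Sum>s'\<in>UNIV. Q s s' * v$s')" for s
      using M_eq[of v "\<lambda>_. 0" s] by (simp add: vec_eq_iff)
    have "(\<Sum>t\<in>UNIV. p t * v$t) = 0"
      using mean_M[of v] \<open>M v = 0\<close> by simp
    moreover have "(\<Sum>t\<in>UNIV. p t * v$t) = (\<Sum>t\<in>UNIV. p t) * v$s" for s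
      unfolding sum_distrib_right
      by (intro sum.cong refl) (metis harmonic_function_const[OF Q irr, of "\<lambda>s. v$s", OF harm])
    ultimately show "v = 0"
      using is_stationaryD(2)[OF p] by (simp add: vec_eq_iff)
  qed
  then obtain v where "M v = (\<chi> s. y s)"
    using linear_injective_imp_surjective[OF lin] by (metis surjD)
  then show ?thesis
    using that M_eq centered by blast
qed

section \<open>Joint and deterministic policies\<close>

lemma joint_actions_PiE: "joint_actions A = Pi\<^sub>E UNIV A"
  by (auto simp: joint_actions_def PiE_def extensional_def)

lemma joint_prob_nonneg: "mu \<in> joint_policies A \<Longrightarrow> 0 \<le> joint_prob mu s a"
  unfolding joint_prob_def joint_policies_def is_policy_def by (auto intro!: prod_nonneg)

lemma sum_joint_prob:
  fixes A :: "'i::finite \<Rightarrow> 'a::finite set"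
  assumes "mu \<in> joint_policies A"
  shows "(\<Sum>a\<in>joint_actions A. joint_prob mu s a) = 1"
proof -
  have "(\<Sum>a\<in>joint_actions A. joint_prob mu s a) = (\<Prod>i\<in>UNIV. \<Sum>x\<in>A i. mu i s x)"
    unfolding joint_actions_PiE joint_prob_def by (rule prod_sum_PiE[symmetric]) auto
  also have "\<dots> = 1"
    using assms unfolding joint_policies_def is_policy_def by simp
  finally show ?thesis .
qed

definition decision_rules :: "('i \<Rightarrow> 'a set) \<Rightarrow> ('i \<Rightarrow> 's \<Rightarrow> 'a) set" where
  "decision_rules A = {d. \<forall>i s. d i s \<in> A i}"

definition det_policy :: "('i \<Rightarrow> 's \<Rightarrow> 'a) \<Rightarrow> 'i \<Rightarrow> 's \<Rightarrow> 'a \<Rightarrow> real" where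
  "det_policy d = (\<lambda>i s a. if a = d i s then 1 else 0)"

lemma decision_rule_joint_action:
  "d \<in> decision_rules A \<Longrightarrow> (\<lambda>i. d i s) \<in> joint_actions A"
  by (simp add: decision_rules_def joint_actions_def)

lemma det_policy_in_joint_policies:
  fixes A :: "'i \<Rightarrow> 'a::finite set"
  shows "d \<in> decision_rules A \<Longrightarrow> det_policy d \<in> joint_policies A"
  unfolding decision_rules_def joint_policies_def is_policy_def det_policy_def
  by (auto simp: sum.delta)

lemma det_policy_in_deterministic_policies:
  "d \<in> decision_rules A \<Longrightarrow> det_policy d \<in> deterministic_policies A"
  unfolding decision_rules_def deterministic_policies_def det_policy_def by blast

lemma joint_prob_det_policy:
  "joint_prob (det_policy d) s a = (if a = (\<lambda>i. d i s) then 1 else 0)"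
proof (cases "a = (\<lambda>i. d i s)")
  case False
  then obtain i where "a i \<noteq> d i s"
    by auto
  then have "(\<Prod>i\<in>UNIV. det_policy d i s (a i)) = 0"
    by (intro prod_zero) (auto simp: det_policy_def)
  then show ?thesis
    using False by (simp add: joint_prob_def)
qed (simp add: joint_prob_def det_policy_def)

lemma sum_joint_prob_det_policy:
  fixes A :: "'i::finite \<Rightarrow> 'a::finite set"
  assumes "d \<in> decision_rules A"
  shows "(\<Sum>a\<in>joint_actions A. joint_prob (det_policy d) s a * X a) = X (\<lambda>i. d i s)"
  using decision_rule_joint_action[OF assms]
  by (simp add: joint_prob_det_policy if_distrib[of "\<lambda>x. x * X _"] sum.delta cong: if_cong)

lemma obtain_max_decision_rule:
  fixes A :: "'i::finite \<Rightarrow> 'a::finite set" and F :: "('i \<Rightarrow> 's::finite \<Rightarrow> 'a) \<Rightarrow> real"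
  assumes "\<And>i. A i \<noteq> {}"
  obtains d where "d \<in> decision_rules A" and "\<And>d'. d' \<in> decision_rules A \<Longrightarrow> F d' \<le> F d"
proof -
  have "(\<lambda>i s. SOME x. x \<in> A i) \<in> decision_rules A"
    using assms by (simp add: decision_rules_def some_in_eq)
  then have "Max (F ` decision_rules A) \<in> F ` decision_rules A"
    by (intro Max_in) auto
  then obtain d where "d \<in> decision_rules A" and "F d = Max (F ` decision_rules A)"
    by (metis imageE)
  then show ?thesis
    using that by simp
qed

section \<open>Average-reward optimality of deterministic policies\<close>

locale irreducible_team_game =
  fixes A :: "'i::finite \<Rightarrow> 'a::finite set"
    and P :: "'s::finite \<Rightarrow> ('i \<Rightarrow> 'a) \<Rightarrow> 's \<Rightarrow> real"
  assumes A_nonempty: "\<And>i. A i \<noteq> {}"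
    and P_nonneg: "\<And>s a s'. a \<in> joint_actions A \<Longrightarrow> 0 \<le> P s a s'"
    and P_sum: "\<And>s a. a \<in> joint_actions A \<Longrightarrow> (\<Sum>s'\<in>UNIV. P s a s') = 1"
    and irreducible: "\<And>mu. mu \<in> joint_policies A \<Longrightarrow> irreducible_chain (chain A P mu)"
begin

lemma sum_joint_prob_mult_transition:
  "(\<Sum>a\<in>joint_actions A. joint_prob mu s a * (\<Sum>s'\<in>UNIV. P s a s' * h s'))
     = (\<Sum>s'\<in>UNIV. chain A P mu s s' * h s')"
  unfolding chain_def
  by (simp add: sum_distrib_left sum_distrib_right mult.assoc, rule sum.swap)

lemma stochastic_matrix_chain:
  assumes mu: "mu \<in> joint_policies A"
  shows "stochastic_matrix (chain A P mu)"
  unfolding stochastic_matrix_def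
proof (intro conjI allI)
  show "0 \<le> chain A P mu s s'" for s s'
    unfolding chain_def using joint_prob_nonneg[OF mu] P_nonneg by (auto intro!: sum_nonneg)
  show "(\<Sum>s'\<in>UNIV. chain A P mu s s') = 1" for s
    using sum_joint_prob_mult_transition[of mu s "\<lambda>_. 1"] sum_joint_prob[OF mu]
    by (simp add: P_sum cong: sum.cong)
qed

lemma is_stationary_chain:
  "mu \<in> joint_policies A \<Longrightarrow> is_stationary (chain A P mu) (stat_dist (chain A P mu))"
  by (rule is_stationary_stat_dist[OF stochastic_matrix_chain irreducible])

lemma avg_reward_affine:
  assumes mu: "mu \<in> joint_policies A"
  shows "avg_reward A P (\<lambda>s a. x * u s a + y * v s a + z) mu
    = x * avg_reward A P u mu + y * avg_reward A P v mu + z"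
  using sum_joint_prob[OF mu] is_stationaryD(2)[OF is_stationary_chain[OF mu]]
  by (simp add: avg_reward_def distrib_left sum.distrib mult.left_commute
      flip: sum_distrib_left sum_distrib_right)

definition bellman_residual :: "('s \<Rightarrow> ('i \<Rightarrow> 'a) \<Rightarrow> real) \<Rightarrow> ('s \<Rightarrow> real) \<Rightarrow> real
    \<Rightarrow> 's \<Rightarrow> ('i \<Rightarrow> 'a) \<Rightarrow> real" where
  "bellman_residual g h c s a = g s a + (\<Sum>s'\<in>UNIV. P s a s' * h s') - h s - c"

lemma avg_reward_bellman_residual:
  assumes mu: "mu \<in> joint_policies A"
  shows "avg_reward A P (bellman_residual g h c) mu = avg_reward A P g mu - c"
proof -
  let ?Q = "chain A P mu"
  have inner: "(\<Sum>a\<in>joint_actions A. joint_prob mu s a * bellman_residual g h c s a)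
      = (\<Sum>a\<in>joint_actions A. joint_prob mu s a * g s a)
        + (\<Sum>s'\<in>UNIV. ?Q s s' * h s') - h s - c" for s
    using sum_joint_prob[OF mu] sum_joint_prob_mult_transition[of mu s h]
    by (simp add: bellman_residual_def algebra_simps sum.distrib sum_subtractf
        flip: sum_distrib_left sum_distrib_right)
  show ?thesis
    unfolding avg_reward_def inner
    using stationary_expectation_step[OF is_stationary_chain[OF mu], of h]
      is_stationaryD(2)[OF is_stationary_chain[OF mu]]
    by (simp add: distrib_left right_diff_distrib sum.distrib sum_subtractf
        flip: sum_distrib_right)
qed

lemma chain_det_policy:
  "d \<in> decision_rules A \<Longrightarrow> chain A P (det_policy d) s s' = P s (\<lambda>i. d i s) s'"
  unfolding chain_def by (rule sum_joint_prob_det_policy)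

lemma avg_reward_det_policy:
  "d \<in> decision_rules A \<Longrightarrow> avg_reward A P g (det_policy d)
    = (\<Sum>s\<in>UNIV. stat_dist (chain A P (det_policy d)) s * g s (\<lambda>i. d i s))"
  unfolding avg_reward_def by (simp add: sum_joint_prob_det_policy)

lemma poisson_equation_det_policy:
  assumes d: "d \<in> decision_rules A"
  obtains h where "\<And>s. bellman_residual g h (avg_reward A P g (det_policy d)) s (\<lambda>i. d i s) = 0"
proof -
  let ?Q = "chain A P (det_policy d)"
  let ?c = "avg_reward A P g (det_policy d)"
  have mu: "det_policy d \<in> joint_policies A"
    by (rule det_policy_in_joint_policies[OF d])
  have centered: "(\<Sum>s\<in>UNIV. stat_dist ?Q s * (g s (\<lambda>i. d i s) - ?c)) = 0"
    using avg_reward_det_policy[OF d] is_stationaryD(2)[OF is_stationary_chain[OF mu]]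
    by (simp add: right_diff_distrib sum_subtractf flip: sum_distrib_right)
  obtain h where h: "\<And>s. h s = (g s (\<lambda>i. d i s) - ?c) + (\<Sum>s'\<in>UNIV. ?Q s s' * h s')"
    using poisson_equation_solvable[OF stochastic_matrix_chain[OF mu] irreducible[OF mu]
        is_stationary_chain[OF mu] centered] by blast
  have "bellman_residual g h ?c s (\<lambda>i. d i s) = 0" for s
    using h[of s] unfolding bellman_residual_def chain_det_policy[OF d] by linarith
  then show ?thesis ..
qed

lemma bellman_residual_nonpos_if_optimal:
  assumes d0: "d0 \<in> decision_rules A"
    and opt: "\<And>d. d \<in> decision_rules A \<Longrightarrow>
      avg_reward A P g (det_policy d) \<le> avg_reward A P g (det_policy d0)"
    and h: "\<And>s. bellman_residual g h (avg_reward A P g (det_policy d0)) s (\<lambda>i. d0 i s) = 0"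
    and a: "a \<in> joint_actions A"
  shows "bellman_residual g h (avg_reward A P g (det_policy d0)) s a \<le> 0"
proof (rule ccontr)
  let ?c = "avg_reward A P g (det_policy d0)"
  let ?B = "bellman_residual g h ?c"
  assume "\<not> ?B s a \<le> 0"
  define d1 where "d1 i t = (if t = s then a i else d0 i t)" for i t
  have d1: "d1 \<in> decision_rules A"
    using d0 a by (simp add: d1_def decision_rules_def joint_actions_def)
  have mu1: "det_policy d1 \<in> joint_policies A"
    by (rule det_policy_in_joint_policies[OF d1])
  let ?p1 = "stat_dist (chain A P (det_policy d1))"
  have "avg_reward A P g (det_policy d1) - ?c = avg_reward A P ?B (det_policy d1)"
    by (rule avg_reward_bellman_residual[OF mu1, symmetric])
  also have "\<dots> = (\<Sum>t\<in>UNIV. ?p1 t * ?B t (\<lambda>i. d1 i t))"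
    by (rule avg_reward_det_policy[OF d1])
  also have "\<dots> = (\<Sum>t\<in>UNIV. if t = s then ?p1 s * ?B s a else 0)"
    by (intro sum.cong refl) (simp add: d1_def h)
  also have "\<dots> = ?p1 s * ?B s a"
    by simp
  also have "\<dots> > 0"
    using \<open>\<not> ?B s a \<le> 0\<close>
      stationary_pos[OF stochastic_matrix_chain[OF mu1] irreducible[OF mu1] is_stationary_chain[OF mu1]]
    by simp
  finally show False
    using opt[OF d1] by simp
qed

lemma avg_reward_nonpos:
  assumes mu: "mu \<in> joint_policies A" and nonpos: "\<And>s a. a \<in> joint_actions A \<Longrightarrow> f s a \<le> 0"
  shows "avg_reward A P f mu \<le> 0"
  unfolding avg_reward_def
  using is_stationaryD(1)[OF is_stationary_chain[OF mu]] joint_prob_nonneg[OF mu] nonpos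
  by (auto intro!: sum_nonpos mult_nonneg_nonpos)

lemma exists_optimal_det_policy:
  obtains d where "d \<in> decision_rules A"
    and "\<And>mu. mu \<in> joint_policies A \<Longrightarrow> avg_reward A P g mu \<le> avg_reward A P g (det_policy d)"
proof -
  obtain d0 where d0: "d0 \<in> decision_rules A" and opt: "\<And>d. d \<in> decision_rules A \<Longrightarrow>
      avg_reward A P g (det_policy d) \<le> avg_reward A P g (det_policy d0)"
    using obtain_max_decision_rule[where A = A and F = "\<lambda>d. avg_reward A P g (det_policy d)",
        OF A_nonempty]
    by blast
  let ?c = "avg_reward A P g (det_policy d0)"
  obtain h where h: "\<And>s. bellman_residual g h ?c s (\<lambda>i. d0 i s) = 0"
    using poisson_equation_det_policy[OF d0, where g = g] by blast
  have "avg_reward A P g mu \<le> ?c" if mu: "mu \<in> joint_policies A" for mu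
  proof -
    have "avg_reward A P g mu - ?c = avg_reward A P (bellman_residual g h ?c) mu"
      by (rule avg_reward_bellman_residual[OF mu, symmetric])
    also have "\<dots> \<le> 0"
      by (rule avg_reward_nonpos[OF mu bellman_residual_nonpos_if_optimal[OF d0 opt h]])
    finally show ?thesis
      by simp
  qed
  then show ?thesis
    using that d0 by blast
qed

lemma avg_reward_mean_variance_penalty:
  assumes mu: "mu \<in> joint_policies A"
  shows "avg_reward A P (\<lambda>s a. r s a - beta * (r s a - lam)\<^sup>2) mu
    = mv_objective beta A P r mu - beta * (avg_reward A P r mu - lam)\<^sup>2"
proof -
  define e where "e = avg_reward A P r mu"
  have variance: "avg_variance A P r mu = avg_reward A P (\<lambda>s a. (r s a - e)\<^sup>2) mu"
    unfolding avg_variance_def avg_reward_def e_def ..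
  have "avg_reward A P (\<lambda>s a. r s a - beta * (r s a - lam)\<^sup>2) mu
      = avg_reward A P (\<lambda>s a. (1 - 2 * beta * (e - lam)) * r s a + (- beta) * (r s a - e)\<^sup>2
          + (2 * beta * (e - lam) * e - beta * (e - lam)\<^sup>2)) mu"
    by (rule arg_cong[where f = "\<lambda>g. avg_reward A P g mu"])
      (simp add: fun_eq_iff power2_eq_square algebra_simps)
  also have "\<dots> = (1 - 2 * beta * (e - lam)) * e + (- beta) * avg_variance A P r mu
      + (2 * beta * (e - lam) * e - beta * (e - lam)\<^sup>2)"
    unfolding avg_reward_affine[OF mu] variance by (simp add: e_def)
  also have "\<dots> = mv_objective beta A P r mu - beta * (e - lam)\<^sup>2"
    unfolding mv_objective_def e_def[symmetric] by (simp add: power2_eq_square algebra_simps)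
  finally show ?thesis
    unfolding e_def .
qed

lemma mv_objective_le_det_policy:
  assumes beta: "0 \<le> beta" and mu: "mu \<in> joint_policies A"
  obtains d where "d \<in> decision_rules A"
    and "mv_objective beta A P r mu \<le> mv_objective beta A P r (det_policy d)"
proof -
  define e where "e = avg_reward A P r mu"
  define g where "g s a = r s a - beta * (r s a - e)\<^sup>2" for s a
  obtain d where d: "d \<in> decision_rules A"
    and opt: "\<And>mu. mu \<in> joint_policies A \<Longrightarrow> avg_reward A P g mu \<le> avg_reward A P g (det_policy d)"
    using exists_optimal_det_policy[of g] by blast
  have mu_d: "det_policy d \<in> joint_policies A"
    by (rule det_policy_in_joint_policies[OF d])
  have "mv_objective beta A P r mu = avg_reward A P g mu"
    unfolding g_def avg_reward_mean_variance_penalty[OF mu] e_def by simp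
  also have "\<dots> \<le> avg_reward A P g (det_policy d)"
    by (rule opt[OF mu])
  also have "\<dots> \<le> mv_objective beta A P r (det_policy d)"
    unfolding g_def avg_reward_mean_variance_penalty[OF mu_d] using beta by simp
  finally show ?thesis
    using that d by blast
qed

end

theorem theorem1:
  fixes A :: "'i::finite \<Rightarrow> 'a::finite set"
    and P :: "'s::finite \<Rightarrow> ('i \<Rightarrow> 'a) \<Rightarrow> 's \<Rightarrow> real"
    and r :: "'s \<Rightarrow> ('i \<Rightarrow> 'a) \<Rightarrow> real"
    and beta :: real
  assumes A_nonempty: "\<And>i. A i \<noteq> {}"
    and P_nonneg: "\<And>s a s'. a \<in> joint_actions A \<Longrightarrow> 0 \<le> P s a s'"
    and P_sum: "\<And>s a. a \<in> joint_actions A \<Longrightarrow> (\<Sum>s'\<in>UNIV. P s a s') = 1"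
    and ergodic: "\<And>mu. mu \<in> joint_policies A \<Longrightarrow> ergodic_chain (chain A P mu)"
    and beta_nonneg: "0 \<le> beta"
  shows "\<exists>mu_star \<in> deterministic_policies A.
           mu_star \<in> joint_policies A \<and>
           (\<forall>mu \<in> joint_policies A. mv_objective beta A P r mu \<le> mv_objective beta A P r mu_star) \<and>
           (\<forall>i. \<forall>nu. is_policy (A i) nu \<longrightarrow>
              mv_objective beta A P r (mu_star(i := nu)) \<le> mv_objective beta A P r mu_star)"
proof -
  have "irreducible_team_game A P"
    using A_nonempty P_nonneg P_sum ergodic
    by (simp add: irreducible_team_game_def ergodic_chain_def)
  then interpret irreducible_team_game A P .
  obtain d0 where d0: "d0 \<in> decision_rules A"
    and d0_max: "\<And>d. d \<in> decision_rules A \<Longrightarrow>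
      mv_objective beta A P r (det_policy d) \<le> mv_objective beta A P r (det_policy d0)"
    using obtain_max_decision_rule[where A = A and F = "\<lambda>d. mv_objective beta A P r (det_policy d)",
        OF A_nonempty] by blast
  have optimal: "mv_objective beta A P r mu \<le> mv_objective beta A P r (det_policy d0)"
    if mu: "mu \<in> joint_policies A" for mu
  proof -
    obtain d where "d \<in> decision_rules A"
      and "mv_objective beta A P r mu \<le> mv_objective beta A P r (det_policy d)"
      using mv_objective_le_det_policy[OF beta_nonneg mu, where r = r] by blast
    then show ?thesis
      using d0_max by (meson order.trans)
  qed
  have "(det_policy d0)(i := nu) \<in> joint_policies A" if "is_policy (A i) nu" for i nu
    using det_policy_in_joint_policies[OF d0] that by (simp add: joint_policies_def)
  then show ?thesis
    using det_policy_in_deterministic_policies[OF d0] det_policy_in_joint_policies[OF d0] optimal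
    by blast
qed

end
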